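(* In $Y_R(\mathfrak{so}_3)$: $$3e_{-1,1}(u+\tfrac12)-e_{-1,1}(u)+3e_{-1,0}(u+\tfrac12)e_{-1,0}(u)-2e_{-1,0}(u)^2=0.$$
   Context: Let $e_{ij}$ ($i,j\in\{-1,0,1\}$) be the matrix units of $\mathrm{End}\,\mathbb{C}^3$, with rows and columns indexed by $-1,0,1$. Let $P=\sum_{i,j}e_{ij}\otimes e_{ji}$, $Q=\sum_{i,j}e_{ij}\otimes e_{-i,-j}$ and $R(u)=1-\frac{P}{u}+\frac{Q}{u-\frac12}$. Let $t$ be the transposition on $\mathrm{End}\,\mathbb{C}^3$ given by $(e_{ij})^t=e_{-j,-i}$. The algebra $Y_R(\mathfrak{so}_3)$ is the unital associative algebra over $\mathbb{C}$ generated by elements $t_{ij}^{(r)}$, $r\ge 1$, $i,j\in\{-1,0,1\}$; put $t_{ij}(u)=\delta_{ij}+\sum_{r\ge1}t^{(r)}_{ij}u^{-r}$, $T(u)=\sum_{i,j}t_{ij}(u)\otimes e_{ij}$, $T^t(u)=\sum_{i,j}t_{ij}(u)\otimes e_{-j,-i}$, $T_1(u)=\sum t_{ij}(u)\otimes e_{ij}\otimes 1$, $T_2(v)=\sum t_{ij}(v)\otimes 1\otimes e_{ij}$. The defining relations are $R(u-v)T_1(u)T_2(v)=T_2(v)T_1(u)R(u-v)$ and $T(u)T^t(u+\frac12)=T^t(u+\frac12)T(u)=1$. The Gauss generators are the unique series $k_i(u)\in 1+u^{-1}Y_R(\mathfrak{so}_3)[[u^{-1}]]$ ($i=-1,0,1$)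 and $e_{ij}(u),f_{ji}(u)\in u^{-1}Y_R(\mathfrak{so}_3)[[u^{-1}]]$ ($-1\le i<j\le1$) such that $T(u)=F(u)K(u)E(u)$, where $F(u)$ is the lower unitriangular matrix with below-diagonal entries $F_{0,-1}=f_{0,-1}(u)$, $F_{1,-1}=f_{1,-1}(u)$, $F_{1,0}=f_{1,0}(u)$, $K(u)=\mathrm{diag}(k_{-1}(u),k_0(u),k_1(u))$, and $E(u)$ is the upper unitriangular matrix with above-diagonal entries $E_{-1,0}=e_{-1,0}(u)$, $E_{-1,1}=e_{-1,1}(u)$, $E_{0,1}=e_{01}(u)$ (rows/columns indexed by $-1,0,1$). *)

theory Defs
  imports Complex_Main
begin

text \<open>A unital associative C-algebra: a ring_1 type together with a unital ring
  homomorphism from the complex numbers onto central elements (the scalars).\<close>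
definition is_calg :: "(complex \<Rightarrow> 'a::ring_1) \<Rightarrow> bool" where
  "is_calg emb \<longleftrightarrow> emb 1 = 1 \<and> (\<forall>x y. emb (x + y) = emb x + emb y)
     \<and> (\<forall>x y. emb (x * y) = emb x * emb y) \<and> (\<forall>c a. emb c * a = a * emb c)"

definition idx :: "int set" where "idx = {-1, 0, 1}"

text \<open>One-variable series: F n is the coefficient of u^(-n).\<close>
definition sprod :: "(nat \<Rightarrow> 'a::ring_1) \<Rightarrow> (nat \<Rightarrow> 'a) \<Rightarrow> nat \<Rightarrow> 'a" where
  "sprod F G n = (\<Sum>a\<le>n. F a * G (n - a))"

definition sone :: "nat \<Rightarrow> 'a::ring_1" where
  "sone n = (if n = 0 then 1 else 0)"

text \<open>Substitution u \<mapsto> u + c:  coefficient of u^(-n) in  sum_r F r (u+c)^(-r).\<close>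
definition sshift :: "(complex \<Rightarrow> 'a::ring_1) \<Rightarrow> complex \<Rightarrow> (nat \<Rightarrow> 'a) \<Rightarrow> nat \<Rightarrow> 'a" where
  "sshift emb c F n = (if n = 0 then F 0 else
     (\<Sum>r\<in>{1..n}. emb ((- c) ^ (n - r) * of_nat ((n - 1) choose (n - r))) * F r))"

text \<open>The series t_ij(u) = delta_ij + sum_{r>=1} t_ij^(r) u^(-r); t i j r for r >= 1 are the generators.\<close>
definition tser :: "(int \<Rightarrow> int \<Rightarrow> nat \<Rightarrow> 'a::ring_1) \<Rightarrow> int \<Rightarrow> int \<Rightarrow> nat \<Rightarrow> 'a" where
  "tser t i j n = (if n = 0 then (if i = j then 1 else 0) else t i j n)"

text \<open>Two-variable (Laurent) series: H a b is the coefficient of u^(-a) v^(-b).\<close>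
definition Wop :: "(int \<Rightarrow> int \<Rightarrow> 'a::ring_1) \<Rightarrow> int \<Rightarrow> int \<Rightarrow> 'a" where
  "Wop H a b = H (a + 1) b - H a (b + 1)"   \<comment> \<open>multiplication by u - v\<close>

definition scal :: "(complex \<Rightarrow> 'a::ring_1) \<Rightarrow> complex \<Rightarrow> (int \<Rightarrow> int \<Rightarrow> 'a) \<Rightarrow> int \<Rightarrow> int \<Rightarrow> 'a" where
  "scal emb c H a b = emb c * H a b"

definition add2 :: "(int \<Rightarrow> int \<Rightarrow> 'a::ring_1) \<Rightarrow> (int \<Rightarrow> int \<Rightarrow> 'a) \<Rightarrow> int \<Rightarrow> int \<Rightarrow> 'a" where
  "add2 H G a b = H a b + G a b"

definition sub2 :: "(int \<Rightarrow> int \<Rightarrow> 'a::ring_1) \<Rightarrow> (int \<Rightarrow> int \<Rightarrow> 'a) \<Rightarrow> int \<Rightarrow> int \<Rightarrow> 'a" where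
  "sub2 H G a b = H a b - G a b"

text \<open>Components of T_1(u) T_2(v) and T_2(v) T_1(u) at row (i,k), column (j,l)
  of End(C^3) \<otimes> End(C^3).\<close>
definition X12 :: "(int \<Rightarrow> int \<Rightarrow> nat \<Rightarrow> 'a::ring_1) \<Rightarrow> int \<Rightarrow> int \<Rightarrow> int \<Rightarrow> int \<Rightarrow> int \<Rightarrow> int \<Rightarrow> 'a" where
  "X12 t i k j l a b = (if 0 \<le> a \<and> 0 \<le> b then tser t i j (nat a) * tser t k l (nat b) else 0)"

definition X21 :: "(int \<Rightarrow> int \<Rightarrow> nat \<Rightarrow> 'a::ring_1) \<Rightarrow> int \<Rightarrow> int \<Rightarrow> int \<Rightarrow> int \<Rightarrow> int \<Rightarrow> int \<Rightarrow> 'a" where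
  "X21 t i k j l a b = (if 0 \<le> a \<and> 0 \<le> b then tser t k l (nat b) * tser t i j (nat a) else 0)"

text \<open>RTT relation multiplied by (u-v)(u-v-1/2), i.e. with
  Rt(w) = w(w-1/2) - (w-1/2) P + w Q,  w = u - v.\<close>
definition RTT_lhs :: "(complex \<Rightarrow> 'a::ring_1) \<Rightarrow> (int \<Rightarrow> int \<Rightarrow> nat \<Rightarrow> 'a) \<Rightarrow> int \<Rightarrow> int \<Rightarrow> int \<Rightarrow> int \<Rightarrow> int \<Rightarrow> int \<Rightarrow> 'a" where
  "RTT_lhs emb t i k j l =
     add2 (add2 (sub2 (sub2 (Wop (Wop (X12 t i k j l))) (scal emb (1/2) (Wop (X12 t i k j l))))
                     (Wop (X12 t k i j l)))
                (scal emb (1/2) (X12 t k i j l)))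
          (if k = - i then Wop (\<lambda>a b. \<Sum>m\<in>idx. X12 t m (- m) j l a b) else (\<lambda>a b. 0))"

definition RTT_rhs :: "(complex \<Rightarrow> 'a::ring_1) \<Rightarrow> (int \<Rightarrow> int \<Rightarrow> nat \<Rightarrow> 'a) \<Rightarrow> int \<Rightarrow> int \<Rightarrow> int \<Rightarrow> int \<Rightarrow> int \<Rightarrow> int \<Rightarrow> 'a" where
  "RTT_rhs emb t i k j l =
     add2 (add2 (sub2 (sub2 (Wop (Wop (X21 t i k j l))) (scal emb (1/2) (Wop (X21 t i k j l))))
                     (Wop (X21 t i k l j)))
                (scal emb (1/2) (X21 t i k l j)))
          (if l = - j then Wop (\<lambda>a b. \<Sum>m\<in>idx. X21 t i k m (- m) a b) else (\<lambda>a b. 0))"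

definition RTT_rel :: "(complex \<Rightarrow> 'a::ring_1) \<Rightarrow> (int \<Rightarrow> int \<Rightarrow> nat \<Rightarrow> 'a) \<Rightarrow> bool" where
  "RTT_rel emb t \<longleftrightarrow> (\<forall>i\<in>idx. \<forall>j\<in>idx. \<forall>k\<in>idx. \<forall>l\<in>idx. \<forall>a b.
      RTT_lhs emb t i k j l a b = RTT_rhs emb t i k j l a b)"

text \<open>T(u) T^t(u+1/2) = T^t(u+1/2) T(u) = 1, where (T^t(u))_{ab} = t_{-b,-a}(u).\<close>
definition unitary_rel :: "(complex \<Rightarrow> 'a::ring_1) \<Rightarrow> (int \<Rightarrow> int \<Rightarrow> nat \<Rightarrow> 'a) \<Rightarrow> bool" where
  "unitary_rel emb t \<longleftrightarrow> (\<forall>i\<in>idx. \<forall>j\<in>idx. \<forall>n.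
      (\<Sum>k\<in>idx. sprod (tser t i k) (sshift emb (1/2) (tser t (- j) (- k))) n)
        = (if n = 0 \<and> i = j then 1 else 0)
    \<and> (\<Sum>k\<in>idx. sprod (sshift emb (1/2) (tser t (- k) (- i))) (tser t k j) n)
        = (if n = 0 \<and> i = j then 1 else 0))"

text \<open>Gauss decomposition T(u) = F(u) K(u) E(u).  kk i = k_i(u), ee i j = e_ij(u) (i<j),
  ff j i = f_ji(u) (i<j).\<close>
definition gauss_decomp :: "(int \<Rightarrow> int \<Rightarrow> nat \<Rightarrow> 'a::ring_1) \<Rightarrow> (int \<Rightarrow> nat \<Rightarrow> 'a)
     \<Rightarrow> (int \<Rightarrow> int \<Rightarrow> nat \<Rightarrow> 'a) \<Rightarrow> (int \<Rightarrow> int \<Rightarrow> nat \<Rightarrow> 'a) \<Rightarrow> bool" where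
  "gauss_decomp t kk ee ff \<longleftrightarrow>
     (\<forall>i\<in>idx. kk i 0 = 1)
   \<and> (\<forall>i\<in>idx. \<forall>j\<in>idx. i < j \<longrightarrow> ee i j 0 = 0 \<and> ff j i 0 = 0)
   \<and> (\<forall>i\<in>idx. \<forall>j\<in>idx. \<forall>n.
        tser t i j n = (\<Sum>m\<in>idx.
           sprod (sprod (if m = i then sone else if m < i then ff i m else (\<lambda>_. 0)) (kk m))
                 (if m = j then sone else if m < j then ee m j else (\<lambda>_. 0)) n))"

end

theory Submission
  imports Defs "HOL-Computational_Algebra.Formal_Power_Series"
begin

text \<open>Read all series as formal power series in 1/u, so that u \<mapsto> u + c is a ring
  endomorphism. Substituting v = u + 1/2 into the RTT relation (cleared of denominators) turns
  u - v into the scalar -1/2, and the entries (-1,-1; j,l) become identities between t_{-1,j}(u)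
  and t_{-1,l}(u + 1/2). Via the Gauss decomposition t_{-1,j} = k_{-1} e_{-1,j} they yield
  commutation rules of k_{-1}(u + 1/2) with k_{-1}(u), e_{-1,0}(u) and e_{-1,1}(u). Inserting these
  rules into the (-1,-1) entry of T(u) T^t(u + 1/2) = 1 and cancelling the invertible factor
  k_{-1}(u) k_{-1}(u + 1/2) leaves the claimed relation.\<close>

lemma calg_add: "is_calg emb \<Longrightarrow> emb (x + y) = emb x + emb y"
  unfolding is_calg_def by blast

lemma calg_mult: "is_calg emb \<Longrightarrow> emb (x * y) = emb x * emb y"
  unfolding is_calg_def by blast

lemma calg_one: "is_calg emb \<Longrightarrow> emb 1 = 1"
  unfolding is_calg_def by blast

lemma calg_commute: "is_calg emb \<Longrightarrow> emb c * a = a * emb c"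
  unfolding is_calg_def by blast

lemma calg_zero: "is_calg emb \<Longrightarrow> emb 0 = 0"
  using calg_add[of emb 0 0] by simp

lemma calg_uminus: "is_calg emb \<Longrightarrow> emb (- x) = - emb x"
  using calg_add[of emb x "- x"] calg_zero[of emb] by (metis add.right_inverse minus_unique)

lemma calg_diff: "is_calg emb \<Longrightarrow> emb (x - y) = emb x - emb y"
  using calg_add[of emb x "- y"] calg_uminus[of emb y] by simp

lemma calg_sum: "is_calg emb \<Longrightarrow> emb (sum f A) = (\<Sum>x\<in>A. emb (f x))"
  by (induction A rule: infinite_finite_induct) (auto simp: calg_zero calg_add)

lemma calg_numeral: "is_calg emb \<Longrightarrow> emb (numeral n) = numeral n"
proof -
  assume E: "is_calg emb"
  have "emb (of_nat m) = of_nat m" for m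
    by (induction m) (auto simp: calg_zero[OF E] calg_add[OF E] calg_one[OF E])
  from this[of "numeral n"] show ?thesis by simp
qed

lemma calg_mult_left: "is_calg emb \<Longrightarrow> emb x * (emb y * a) = emb (x * y) * a"
  by (simp add: calg_mult mult.assoc)

lemma calg_mult_mult:
  assumes E: "is_calg emb"
  shows "emb x * a * (emb y * b) = emb (x * y) * (a * b)"
proof -
  have "emb x * a * (emb y * b) = emb x * (a * emb y) * b" by (simp only: mult.assoc)
  also have "a * emb y = emb y * a" by (rule calg_commute[OF E, symmetric])
  finally show ?thesis by (simp only: mult.assoc calg_mult[OF E])
qed

lemma calg_left_commute:
  assumes E: "is_calg emb"
  shows "a * (emb c * b) = emb c * (a * b)"
proof -
  have "a * (emb c * b) = (a * emb c) * b" by (simp only: mult.assoc)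
  also have "a * emb c = emb c * a" by (rule calg_commute[OF E, symmetric])
  finally show ?thesis by (simp only: mult.assoc)
qed

lemma fps_three_cancel:
  fixes X Y :: "'a::ring_1 fps"
  assumes E: "is_calg (emb :: complex \<Rightarrow> 'a)" and "3 * X = 3 * Y"
  shows "X = Y"
proof (rule fps_ext)
  fix n
  have third: "emb (1/3) * (3 * z) = z" for z :: 'a
    using calg_mult[OF E, of "1/3" 3] calg_numeral[OF E, of "num.Bit1 num.One"] calg_one[OF E]
    by (simp add: mult.assoc[symmetric])
  have "3 * fps_nth X n = 3 * fps_nth Y n"
    using arg_cong[OF assms(2), of "\<lambda>F. fps_nth F n"] by (simp add: fps_numeral_fps_const)
  then show "fps_nth X n = fps_nth Y n"
    using third by metis
qed

lemma fps_mult_left_cancel: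
  fixes K X Y :: "'a::ring_1 fps"
  assumes K0: "fps_nth K 0 = 1" and eq: "K * X = K * Y"
  shows "X = Y"
proof -
  define D where "D = X - Y"
  have KD: "K * D = 0" using eq by (simp add: D_def right_diff_distrib)
  have "fps_nth D n = 0" for n
  proof (induction n rule: less_induct)
    case (less n)
    have "0 = fps_nth (K * D) n" using KD by simp
    also have "\<dots> = fps_nth K 0 * fps_nth D n + (\<Sum>i\<in>{1..n}. fps_nth K i * fps_nth D (n - i))"
      by (simp add: fps_mult_nth sum.atLeast_Suc_atMost)
    also have "(\<Sum>i\<in>{1..n}. fps_nth K i * fps_nth D (n - i)) = 0"
      by (rule sum.neutral) (auto simp: less)
    finally show ?case using K0 by simp
  qed
  then show ?thesis by (simp add: D_def fps_eq_iff)
qed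

lemma sprod_eq_fps_nth: "sprod F G n = fps_nth (Abs_fps F * Abs_fps G) n"
  by (simp add: sprod_def fps_mult_nth atLeast0AtMost)

lemma Abs_fps_sprod: "Abs_fps (sprod F G) = Abs_fps F * Abs_fps G"
  by (rule fps_ext) (simp add: sprod_eq_fps_nth)

lemma Abs_fps_sone: "Abs_fps sone = 1"
  by (rule fps_ext) (simp add: sone_def)

lemma sum_idx: "(\<Sum>m\<in>idx. f m) = f (-1) + f 0 + f 1"
  by (simp add: idx_def add.assoc)

text \<open>\<open>shift_coeff c r m\<close> is the coefficient of u^-m in (u + c)^-r.\<close>

definition shift_coeff :: "complex \<Rightarrow> nat \<Rightarrow> nat \<Rightarrow> complex" where
  "shift_coeff c r m = (if r \<le> m then ((- of_nat r) gchoose (m - r)) * c ^ (m - r) else 0)"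

lemma shift_coeff_eq_choose:
  assumes "1 \<le> r" "r \<le> m"
  shows "(- c) ^ (m - r) * of_nat ((m - 1) choose (m - r)) = shift_coeff c r m"
proof -
  have "of_nat r + of_nat (m - r) - 1 = (of_nat (m - 1) :: complex)"
    using assms by (simp add: of_nat_diff)
  then have "(- of_nat r) gchoose (m - r) = (-1) ^ (m - r) * (of_nat (m - 1) gchoose (m - r) :: complex)"
    by (simp add: gbinomial_minus)
  moreover have "(of_nat ((m - 1) choose (m - r)) :: complex) = of_nat (m - 1) gchoose (m - r)"
    by (rule binomial_gbinomial)
  moreover have "(- c) ^ (m - r) = (-1) ^ (m - r) * c ^ (m - r)"
    by (rule power_minus)
  ultimately show ?thesis
    using assms by (simp add: shift_coeff_def)
qed

lemma sshift_eq_sum_shift_coeff: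
  assumes E: "is_calg emb"
  shows "sshift emb c F m = (\<Sum>r\<le>m. emb (shift_coeff c r m) * F r)"
proof (cases m)
  case 0
  then show ?thesis by (simp add: sshift_def shift_coeff_def calg_one[OF E])
next
  case (Suc m')
  have "(\<Sum>r\<le>m. emb (shift_coeff c r m) * F r)
      = emb (shift_coeff c 0 m) * F 0 + (\<Sum>r\<in>{1..m}. emb (shift_coeff c r m) * F r)"
    by (simp only: atMost_atLeast0 sum.atLeast_Suc_atMost[OF le0] One_nat_def)
  also have "shift_coeff c 0 m = 0" using Suc by (simp add: shift_coeff_def)
  also have "(\<Sum>r\<in>{1..m}. emb (shift_coeff c r m) * F r)
      = (\<Sum>r\<in>{1..m}. emb ((- c) ^ (m - r) * of_nat ((m - 1) choose (m - r))) * F r)"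
    by (intro sum.cong refl) (use shift_coeff_eq_choose in fastforce)
  also have "\<dots> = sshift emb c F m"
    using Suc by (simp add: sshift_def)
  finally show ?thesis by (simp add: calg_zero[OF E])
qed

text \<open>(u + c)^-r (u + c)^-s = (u + c)^-(r+s), i.e. the Chu-Vandermonde identity.\<close>

lemma shift_coeff_Vandermonde:
  "(\<Sum>i\<le>n. shift_coeff c r i * shift_coeff c s (n - i)) = shift_coeff c (r + s) n"
proof (cases "r + s \<le> n")
  case False
  then show ?thesis
    by (auto simp: shift_coeff_def intro!: sum.neutral)
next
  case True
  define p where "p = n - r - s"
  have "(\<Sum>i\<le>n. shift_coeff c r i * shift_coeff c s (n - i))
      = (\<Sum>i\<in>{0+r..p+r}. shift_coeff c r i * shift_coeff c s (n - i))"
    using True by (intro sum.mono_neutral_right) (auto simp: p_def shift_coeff_def)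
  also have "\<dots> = (\<Sum>k\<in>{0..p}. shift_coeff c r (k + r) * shift_coeff c s (n - (k + r)))"
    by (rule sum.shift_bounds_cl_nat_ivl)
  also have "\<dots> = (\<Sum>k\<in>{0..p}. ((- of_nat r) gchoose k) * ((- of_nat s) gchoose (p - k)) * c ^ p)"
  proof (rule sum.cong[OF refl])
    fix k assume k: "k \<in> {0..p}"
    have "c ^ k * c ^ (p - k) = c ^ p" using k by (simp add: power_add[symmetric])
    moreover have "n - (k + r) - s = p - k" using k by (simp add: p_def)
    ultimately show "shift_coeff c r (k + r) * shift_coeff c s (n - (k + r))
        = ((- of_nat r) gchoose k) * ((- of_nat s) gchoose (p - k)) * c ^ p"
      using k True by (simp add: shift_coeff_def p_def algebra_simps)
  qed
  also have "\<dots> = ((- of_nat r + - of_nat s) gchoose p) * c ^ p"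
    by (simp add: sum_distrib_right[symmetric] gbinomial_Vandermonde)
  also have "\<dots> = shift_coeff c (r + s) n"
    using True by (simp add: shift_coeff_def p_def algebra_simps)
  finally show ?thesis .
qed

definition fps_translate :: "(complex \<Rightarrow> 'a::ring_1) \<Rightarrow> complex \<Rightarrow> 'a fps \<Rightarrow> 'a fps" where
  "fps_translate emb c F = Abs_fps (sshift emb c (fps_nth F))"

lemma fps_translate_Abs_fps: "fps_translate emb c (Abs_fps F) = Abs_fps (sshift emb c F)"
  by (simp add: fps_translate_def Abs_fps_inverse)

lemma fps_translate_nth_0: "fps_nth (fps_translate emb c F) 0 = fps_nth F 0"
  by (simp add: fps_translate_def sshift_def)

lemma fps_translate_nth:
  "is_calg emb \<Longrightarrow> fps_nth (fps_translate emb c F) n = (\<Sum>r\<le>n. emb (shift_coeff c r n) * fps_nth F r)"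
  by (simp add: fps_translate_def sshift_eq_sum_shift_coeff)

lemma fps_translate_nth_upto:
  assumes E: "is_calg emb" and "m \<le> n"
  shows "fps_nth (fps_translate emb c F) m = (\<Sum>r\<le>n. emb (shift_coeff c r m) * fps_nth F r)"
  unfolding fps_translate_nth[OF E] using assms
  by (intro sum.mono_neutral_left) (auto simp: shift_coeff_def calg_zero[OF E])

lemma fps_translate_mult:
  assumes E: "is_calg emb"
  shows "fps_translate emb c (F * G) = fps_translate emb c F * fps_translate emb c G"
proof (rule fps_ext)
  fix n
  define h where "h r s = emb (shift_coeff c (r + s) n) * (fps_nth F r * fps_nth G s)" for r s
  have "fps_nth (fps_translate emb c (F * G)) n
      = (\<Sum>m\<le>n. emb (shift_coeff c m n) * (\<Sum>r\<le>m. fps_nth F r * fps_nth G (m - r)))"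
    by (simp add: fps_translate_nth[OF E] fps_mult_nth atLeast0AtMost)
  also have "\<dots> = (\<Sum>m\<le>n. \<Sum>r\<le>m. h r (m - r))"
    by (auto simp: h_def sum_distrib_left intro!: sum.cong)
  also have "\<dots> = (\<Sum>(r, s)\<in>{(r, s). r + s \<le> n}. h r s)"
    by (rule sum.triangle_reindex_eq[symmetric])
  also have "\<dots> = (\<Sum>(r, s)\<in>{..n} \<times> {..n}. h r s)"
    by (rule sum.mono_neutral_left) (auto simp: h_def shift_coeff_def calg_zero[OF E] split: if_split_asm)
  also have "\<dots> = (\<Sum>r\<le>n. \<Sum>s\<le>n. \<Sum>i\<le>n.
      emb (shift_coeff c r i) * fps_nth F r * (emb (shift_coeff c s (n - i)) * fps_nth G s))"
    by (simp add: sum.cartesian_product[symmetric] h_def shift_coeff_Vandermonde[symmetric]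
        calg_sum[OF E] sum_distrib_right calg_mult_mult[OF E])
  also have "\<dots> = (\<Sum>r\<le>n. \<Sum>i\<le>n. \<Sum>s\<le>n.
      emb (shift_coeff c r i) * fps_nth F r * (emb (shift_coeff c s (n - i)) * fps_nth G s))"
    by (rule sum.cong[OF refl], rule sum.swap)
  also have "\<dots> = (\<Sum>i\<le>n. \<Sum>r\<le>n. \<Sum>s\<le>n.
      emb (shift_coeff c r i) * fps_nth F r * (emb (shift_coeff c s (n - i)) * fps_nth G s))"
    by (rule sum.swap)
  also have "\<dots> = (\<Sum>i\<le>n. (\<Sum>r\<le>n. emb (shift_coeff c r i) * fps_nth F r)
      * (\<Sum>s\<le>n. emb (shift_coeff c s (n - i)) * fps_nth G s))"
    by (simp only: sum_product)
  also have "\<dots> = fps_nth (fps_translate emb c F * fps_translate emb c G) n"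
    unfolding fps_mult_nth atLeast0AtMost
    by (intro sum.cong refl arg_cong2[where f = "(*)"] fps_translate_nth_upto[OF E, symmetric]) auto
  finally show "fps_nth (fps_translate emb c (F * G)) n = fps_nth (fps_translate emb c F * fps_translate emb c G) n" .
qed

text \<open>\<open>diag_translate emb c H n\<close> is the coefficient of u^-n in
  H(u, u + c) = \<Sum> H a b u^-a (u + c)^-b, for H vanishing unless a, b \<ge> -2 (the support of
  \<open>RTT_lhs\<close> and \<open>RTT_rhs\<close>); \<open>int_shift_coeff c b k\<close> is the coefficient of u^-(b+k) in (u + c)^-b.\<close>

definition diag_support :: "nat \<Rightarrow> (int \<times> int) set" where
  "diag_support n = {p. -2 \<le> fst p \<and> -2 \<le> snd p \<and> fst p + snd p \<le> int n}"

definition int_shift_coeff :: "complex \<Rightarrow> int \<Rightarrow> nat \<Rightarrow> complex" where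
  "int_shift_coeff c b k = (of_int (- b) gchoose k) * c ^ k"

definition diag_translate :: "(complex \<Rightarrow> 'a::ring_1) \<Rightarrow> complex \<Rightarrow> (int \<Rightarrow> int \<Rightarrow> 'a) \<Rightarrow> nat \<Rightarrow> 'a" where
  "diag_translate emb c H n = (\<Sum>p\<in>diag_support n.
     emb (int_shift_coeff c (snd p) (nat (int n - fst p - snd p))) * H (fst p) (snd p))"

definition vanishes_below :: "int \<Rightarrow> (int \<Rightarrow> int \<Rightarrow> 'a::zero) \<Rightarrow> bool" where
  "vanishes_below m H \<longleftrightarrow> (\<forall>a b. a < m \<or> b < m \<longrightarrow> H a b = 0)"

lemma finite_diag_support: "finite (diag_support n)"
proof (rule finite_subset)
  show "diag_support n \<subseteq> {-2..int n + 2} \<times> {-2..int n + 2}"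
    by (auto simp: diag_support_def)
qed simp

lemma vanishes_below_Wop: "vanishes_below 0 H \<Longrightarrow> vanishes_below (-1) (Wop H)"
  by (simp add: vanishes_below_def Wop_def)

lemma vanishes_below_X12: "m \<le> 0 \<Longrightarrow> vanishes_below m (X12 t i k j l)"
  by (simp add: vanishes_below_def X12_def)

lemma vanishes_below_X21: "m \<le> 0 \<Longrightarrow> vanishes_below m (X21 t i k j l)"
  by (simp add: vanishes_below_def X21_def)

lemma vanishes_below_sum_X21: "m \<le> 0 \<Longrightarrow> vanishes_below m (\<lambda>a b. \<Sum>m\<in>idx. X21 t i k m (- m) a b)"
  by (simp add: vanishes_below_def X21_def)

lemma diag_translate_add2: "diag_translate emb c (add2 H G) n = diag_translate emb c H n + diag_translate emb c G n"
  by (simp add: diag_translate_def add2_def distrib_left sum.distrib)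

lemma diag_translate_sub2: "diag_translate emb c (sub2 H G) n = diag_translate emb c H n - diag_translate emb c G n"
  by (simp add: diag_translate_def sub2_def right_diff_distrib sum_subtractf)

lemma diag_translate_zero: "diag_translate emb c (\<lambda>a b. 0) n = 0"
  by (simp add: diag_translate_def)

lemma diag_translate_scal:
  assumes E: "is_calg emb"
  shows "diag_translate emb c (scal emb d H) n = emb d * diag_translate emb c H n"
proof -
  have "emb x * (emb d * y) = emb d * (emb x * y)" for x y
    by (simp add: calg_mult_left[OF E] mult.commute)
  then show ?thesis by (simp add: diag_translate_def scal_def sum_distrib_left)
qed

lemma int_shift_coeff_diff:
  "int_shift_coeff c b (Suc k) - int_shift_coeff c (b - 1) (Suc k) = - c * int_shift_coeff c b k"
proof -
  have "(of_int (- (b - 1)) :: complex) = of_int (- b) + 1" by simp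
  then have "int_shift_coeff c (b - 1) (Suc k)
      = ((of_int (- b) gchoose k) + (of_int (- b) gchoose Suc k)) * c ^ Suc k"
    by (simp only: int_shift_coeff_def gbinomial_Suc_Suc)
  then show ?thesis by (simp add: int_shift_coeff_def algebra_simps)
qed

lemma diag_support_shift_fst:
  fixes H :: "int \<Rightarrow> int \<Rightarrow> 'a::ring_1"
  assumes "vanishes_below (-1) H"
  shows "(\<Sum>p\<in>diag_support n. w (snd p) (nat (int n - fst p - snd p)) * H (fst p + 1) (snd p))
       = (\<Sum>p\<in>diag_support (Suc n). w (snd p) (nat (int (Suc n) - fst p - snd p)) * H (fst p) (snd p))"
proof -
  have "(\<Sum>p\<in>diag_support n. w (snd p) (nat (int n - fst p - snd p)) * H (fst p + 1) (snd p))
      = (\<Sum>p\<in>{p. -1 \<le> fst p \<and> -2 \<le> snd p \<and> fst p + snd p \<le> int (Suc n)}.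
           w (snd p) (nat (int (Suc n) - fst p - snd p)) * H (fst p) (snd p))"
    by (rule sum.reindex_bij_witness[where j = "\<lambda>p. (fst p + 1, snd p)" and i = "\<lambda>p. (fst p - 1, snd p)"])
       (auto simp: diag_support_def)
  also have "\<dots> = (\<Sum>p\<in>diag_support (Suc n). w (snd p) (nat (int (Suc n) - fst p - snd p)) * H (fst p) (snd p))"
  proof (intro sum.mono_neutral_left finite_diag_support ballI)
    fix p assume "p \<in> diag_support (Suc n) - {p. -1 \<le> fst p \<and> -2 \<le> snd p \<and> fst p + snd p \<le> int (Suc n)}"
    then have "H (fst p) (snd p) = 0"
      using assms by (auto simp: diag_support_def vanishes_below_def)
    then show "w (snd p) (nat (int (Suc n) - fst p - snd p)) * H (fst p) (snd p) = 0" by simp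
  qed (auto simp: diag_support_def)
  finally show ?thesis .
qed

lemma diag_support_shift_snd:
  fixes H :: "int \<Rightarrow> int \<Rightarrow> 'a::ring_1"
  assumes "vanishes_below (-1) H"
  shows "(\<Sum>p\<in>diag_support n. w (snd p) (nat (int n - fst p - snd p)) * H (fst p) (snd p + 1))
       = (\<Sum>p\<in>diag_support (Suc n). w (snd p - 1) (nat (int (Suc n) - fst p - snd p)) * H (fst p) (snd p))"
proof -
  have "(\<Sum>p\<in>diag_support n. w (snd p) (nat (int n - fst p - snd p)) * H (fst p) (snd p + 1))
      = (\<Sum>p\<in>{p. -2 \<le> fst p \<and> -1 \<le> snd p \<and> fst p + snd p \<le> int (Suc n)}.
           w (snd p - 1) (nat (int (Suc n) - fst p - snd p)) * H (fst p) (snd p))"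
    by (rule sum.reindex_bij_witness[where j = "\<lambda>p. (fst p, snd p + 1)" and i = "\<lambda>p. (fst p, snd p - 1)"])
       (auto simp: diag_support_def algebra_simps)
  also have "\<dots> = (\<Sum>p\<in>diag_support (Suc n). w (snd p - 1) (nat (int (Suc n) - fst p - snd p)) * H (fst p) (snd p))"
  proof (intro sum.mono_neutral_left finite_diag_support ballI)
    fix p assume "p \<in> diag_support (Suc n) - {p. -2 \<le> fst p \<and> -1 \<le> snd p \<and> fst p + snd p \<le> int (Suc n)}"
    then have "H (fst p) (snd p) = 0"
      using assms by (auto simp: diag_support_def vanishes_below_def)
    then show "w (snd p - 1) (nat (int (Suc n) - fst p - snd p)) * H (fst p) (snd p) = 0" by simp
  qed (auto simp: diag_support_def)
  finally show ?thesis .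
qed

text \<open>Under v = u + c the factor u - v becomes the scalar -c.\<close>

lemma diag_translate_Wop:
  assumes E: "is_calg emb" and H: "vanishes_below (-1) H"
  shows "diag_translate emb c (Wop H) n = emb (- c) * diag_translate emb c H n"
proof -
  define w where "w b k = emb (int_shift_coeff c b k)" for b k
  define D where "D p = (w (snd p) (nat (int (Suc n) - fst p - snd p))
      - w (snd p - 1) (nat (int (Suc n) - fst p - snd p))) * H (fst p) (snd p)" for p
  have "diag_translate emb c (Wop H) n = (\<Sum>p\<in>diag_support (Suc n). D p)"
    unfolding diag_translate_def Wop_def D_def w_def[symmetric]
    by (simp add: right_diff_distrib left_diff_distrib sum_subtractf
        diag_support_shift_fst[OF H] diag_support_shift_snd[OF H])
  also have "\<dots> = (\<Sum>p\<in>diag_support n. D p)"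
  proof (intro sum.mono_neutral_right finite_diag_support ballI)
    fix p assume "p \<in> diag_support (Suc n) - diag_support n"
    then have "nat (int (Suc n) - fst p - snd p) = 0"
      by (auto simp: diag_support_def)
    then show "D p = 0"
      by (simp add: D_def w_def int_shift_coeff_def)
  qed (auto simp: diag_support_def)
  also have "\<dots> = (\<Sum>p\<in>diag_support n. emb (- c) * (w (snd p) (nat (int n - fst p - snd p)) * H (fst p) (snd p)))"
  proof (rule sum.cong[OF refl])
    fix p assume "p \<in> diag_support n"
    then have "nat (int (Suc n) - fst p - snd p) = Suc (nat (int n - fst p - snd p))"
      by (auto simp: diag_support_def)
    then show "D p = emb (- c) * (w (snd p) (nat (int n - fst p - snd p)) * H (fst p) (snd p))"
      by (simp add: D_def w_def calg_diff[OF E, symmetric] int_shift_coeff_diff calg_mult_left[OF E])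
  qed
  also have "\<dots> = emb (- c) * diag_translate emb c H n"
    by (simp add: diag_translate_def w_def sum_distrib_left)
  finally show ?thesis .
qed

lemma diag_translate_product:
  assumes E: "is_calg emb"
  shows "diag_translate emb c (\<lambda>a b. if 0 \<le> a \<and> 0 \<le> b then P (nat a) (nat b) else 0) n
       = (\<Sum>i\<le>n. \<Sum>r\<le>n - i. emb (shift_coeff c r (n - i)) * P i r)"
proof -
  have "diag_translate emb c (\<lambda>a b. if 0 \<le> a \<and> 0 \<le> b then P (nat a) (nat b) else 0) n
      = (\<Sum>p\<in>{p. 0 \<le> fst p \<and> 0 \<le> snd p \<and> fst p + snd p \<le> int n}.
           emb (int_shift_coeff c (snd p) (nat (int n - fst p - snd p))) * P (nat (fst p)) (nat (snd p)))"
    unfolding diag_translate_def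
    by (rule sum.mono_neutral_cong_right[OF finite_diag_support]) (auto simp: diag_support_def)
  also have "\<dots> = (\<Sum>q\<in>Sigma {..n} (\<lambda>i. {..n - i}). emb (shift_coeff c (snd q) (n - fst q)) * P (fst q) (snd q))"
  proof (rule sum.reindex_bij_witness[where i = "\<lambda>q. (int (fst q), int (snd q))"
        and j = "\<lambda>p. (nat (fst p), nat (snd p))"])
    fix p :: "int \<times> int"
    assume "p \<in> {p. 0 \<le> fst p \<and> 0 \<le> snd p \<and> fst p + snd p \<le> int n}"
    then obtain a b where p: "p = (int a, int b)" "a + b \<le> n"
      by (cases p) (auto elim!: nonneg_int_cases)
    then have "nat (int n - int a - int b) = n - a - b" "b \<le> n - a"
        and "of_int (- int b) = (- of_nat b :: complex)"
      by simp_all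
    then show "emb (shift_coeff c (snd (nat (fst p), nat (snd p))) (n - fst (nat (fst p), nat (snd p))))
          * P (fst (nat (fst p), nat (snd p))) (snd (nat (fst p), nat (snd p)))
        = emb (int_shift_coeff c (snd p) (nat (int n - fst p - snd p))) * P (nat (fst p)) (nat (snd p))"
      using p by (simp add: int_shift_coeff_def shift_coeff_def diff_diff_add)
  qed auto
  also have "\<dots> = (\<Sum>i\<le>n. \<Sum>r\<le>n - i. emb (shift_coeff c r (n - i)) * P i r)"
    by (simp add: sum.Sigma split_beta)
  finally show ?thesis .
qed

lemma diag_translate_X12:
  assumes E: "is_calg emb"
  shows "diag_translate emb c (X12 t i k j l) n
       = fps_nth (Abs_fps (tser t i j) * fps_translate emb c (Abs_fps (tser t k l))) n"
proof -
  have "fps_nth (Abs_fps (tser t i j) * fps_translate emb c (Abs_fps (tser t k l))) n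
      = (\<Sum>a\<le>n. tser t i j a * (\<Sum>r\<le>n - a. emb (shift_coeff c r (n - a)) * tser t k l r))"
    by (simp add: fps_mult_nth atLeast0AtMost fps_translate_nth[OF E])
  also have "\<dots> = (\<Sum>a\<le>n. \<Sum>r\<le>n - a. emb (shift_coeff c r (n - a)) * (tser t i j a * tser t k l r))"
    by (simp add: sum_distrib_left calg_left_commute[OF E])
  finally have "fps_nth (Abs_fps (tser t i j) * fps_translate emb c (Abs_fps (tser t k l))) n
      = (\<Sum>a\<le>n. \<Sum>r\<le>n - a. emb (shift_coeff c r (n - a)) * (tser t i j a * tser t k l r))" .
  with diag_translate_product[OF E, where P = "\<lambda>a r. tser t i j a * tser t k l r"] show ?thesis
    unfolding X12_def by simp
qed

lemma diag_translate_X21: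
  assumes E: "is_calg emb"
  shows "diag_translate emb c (X21 t i k j l) n
       = fps_nth (fps_translate emb c (Abs_fps (tser t k l)) * Abs_fps (tser t i j)) n"
proof -
  have "fps_nth (fps_translate emb c (Abs_fps (tser t k l)) * Abs_fps (tser t i j)) n
      = (\<Sum>b=0..n. (\<Sum>r\<le>b. emb (shift_coeff c r b) * tser t k l r) * tser t i j (n - b))"
    by (simp add: fps_mult_nth fps_translate_nth[OF E])
  also have "\<dots> = (\<Sum>a=0..n. (\<Sum>r\<le>n - a. emb (shift_coeff c r (n - a)) * tser t k l r) * tser t i j (n - (n - a)))"
    by (subst sum.atLeastAtMost_rev) simp
  also have "\<dots> = (\<Sum>a\<le>n. \<Sum>r\<le>n - a. emb (shift_coeff c r (n - a)) * (tser t k l r * tser t i j a))"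
    by (auto simp: atLeast0AtMost sum_distrib_right mult.assoc intro!: sum.cong)
  finally have "fps_nth (fps_translate emb c (Abs_fps (tser t k l)) * Abs_fps (tser t i j)) n
      = (\<Sum>a\<le>n. \<Sum>r\<le>n - a. emb (shift_coeff c r (n - a)) * (tser t k l r * tser t i j a))" .
  with diag_translate_product[OF E, where P = "\<lambda>a r. tser t k l r * tser t i j a"] show ?thesis
    unfolding X21_def by simp
qed

lemma diag_translate_sum_X21:
  assumes E: "is_calg emb"
  shows "diag_translate emb c (\<lambda>a b. \<Sum>m\<in>idx. X21 t i k m (- m) a b) n
       = fps_nth (\<Sum>m\<in>idx. fps_translate emb c (Abs_fps (tser t k (- m))) * Abs_fps (tser t i m)) n"
  by (simp add: diag_translate_def sum_distrib_left fps_sum_nth diag_translate_X21[OF E, symmetric]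
      sum.swap[of _ idx])

text \<open>The scalars that \<open>RTT_lhs\<close> and \<open>RTT_rhs\<close> pick up at u - v = -1/2 when i = k = -1.\<close>

lemma rtt_lhs_scalar:
  assumes E: "is_calg emb"
  shows "emb (- (1/2)) * (emb (- (1/2)) * x) - emb (1/2) * (emb (- (1/2)) * x) - emb (- (1/2)) * x
      + emb (1/2) * x = emb (3/2) * x"
proof -
  have "emb (- (1/2)) * (emb (- (1/2)) * x) - emb (1/2) * (emb (- (1/2)) * x) - emb (- (1/2)) * x
      + emb (1/2) * x = (emb (1/4) - emb (-1/4) - emb (- (1/2)) + emb (1/2)) * x"
    by (simp add: calg_mult_left[OF E] algebra_simps)
  also have "emb (1/4) - emb (-1/4) - emb (- (1/2)) + emb (1/2) = emb (3/2)"
    by (simp add: calg_diff[OF E, symmetric] calg_add[OF E, symmetric])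
  finally show ?thesis .
qed

lemma rtt_rhs_scalar:
  assumes E: "is_calg emb"
  shows "emb (- (1/2)) * (emb (- (1/2)) * x) - emb (1/2) * (emb (- (1/2)) * x) - emb (- (1/2)) * y
      + emb (1/2) * y = emb (1/2) * x + y"
proof -
  have "emb (- (1/2)) * (emb (- (1/2)) * x) - emb (1/2) * (emb (- (1/2)) * x) - emb (- (1/2)) * y
      + emb (1/2) * y = (emb (1/4) - emb (-1/4)) * x + (emb (1/2) - emb (- (1/2))) * y"
    by (simp add: calg_mult_left[OF E] algebra_simps)
  also have "emb (1/4) - emb (-1/4) = emb (1/2)"
    by (simp add: calg_diff[OF E, symmetric])
  also have "emb (1/2) - emb (- (1/2)) = 1"
    by (simp add: calg_diff[OF E, symmetric] calg_one[OF E])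
  finally show ?thesis by simp
qed

lemma rtt_first_row:
  assumes E: "is_calg emb" and R: "RTT_rel emb t" and j: "j \<in> idx" and l: "l \<in> idx"
  shows "3 * (Abs_fps (tser t (-1) j) * fps_translate emb (1/2) (Abs_fps (tser t (-1) l)))
       = fps_translate emb (1/2) (Abs_fps (tser t (-1) l)) * Abs_fps (tser t (-1) j)
         + 2 * (fps_translate emb (1/2) (Abs_fps (tser t (-1) j)) * Abs_fps (tser t (-1) l))
         - (if l = - j then (\<Sum>m\<in>idx. fps_translate emb (1/2) (Abs_fps (tser t (-1) (- m)))
                                     * Abs_fps (tser t (-1) m)) else 0)"
    (is "3 * ?X = ?Y1 + 2 * ?Y2 - ?Z")
proof (rule fps_ext)
  fix n
  have "RTT_lhs emb t (-1) (-1) j l = RTT_rhs emb t (-1) (-1) j l"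
    using R j l unfolding RTT_rel_def idx_def by (intro ext) blast
  then have "diag_translate emb (1/2) (RTT_lhs emb t (-1) (-1) j l) n
      = diag_translate emb (1/2) (RTT_rhs emb t (-1) (-1) j l) n"
    by simp
  moreover have "diag_translate emb (1/2) (RTT_lhs emb t (-1) (-1) j l) n = emb (3/2) * fps_nth ?X n"
    unfolding RTT_lhs_def
    by (simp add: diag_translate_add2 diag_translate_sub2 diag_translate_scal[OF E]
        diag_translate_Wop[OF E] diag_translate_X12[OF E] diag_translate_zero
        vanishes_below_Wop vanishes_below_X12 rtt_lhs_scalar[OF E])
  moreover have "diag_translate emb (1/2) (RTT_rhs emb t (-1) (-1) j l) n
      = emb (1/2) * fps_nth ?Y1 n + fps_nth ?Y2 n + (if l = - j then emb (- (1/2)) * fps_nth ?Z n else 0)"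
    unfolding RTT_rhs_def
    by (simp add: diag_translate_add2 diag_translate_sub2 diag_translate_scal[OF E]
        diag_translate_Wop[OF E] diag_translate_X21[OF E] diag_translate_zero
        diag_translate_sum_X21[OF E] vanishes_below_Wop vanishes_below_X21
        vanishes_below_sum_X21 rtt_rhs_scalar[OF E])
  ultimately have main: "emb (3/2) * fps_nth ?X n
      = emb (1/2) * fps_nth ?Y1 n + fps_nth ?Y2 n + (if l = - j then emb (- (1/2)) * fps_nth ?Z n else 0)"
    by simp
  have double: "2 * (emb x * z) = emb (2 * x) * z" for x z
    using calg_mult[OF E, of 2 x] calg_numeral[OF E, of "num.Bit0 num.One"] by (simp add: mult.assoc)
  have "3 * fps_nth ?X n = 2 * (emb (3/2) * fps_nth ?X n)"
    by (simp add: double calg_numeral[OF E])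
  also have "\<dots> = fps_nth ?Y1 n + 2 * fps_nth ?Y2 n - fps_nth ?Z n"
    unfolding main by (simp add: distrib_left double calg_one[OF E] calg_uminus[OF E])
  finally show "fps_nth (3 * ?X) n = fps_nth (?Y1 + 2 * ?Y2 - ?Z) n"
    by (simp add: fps_numeral_fps_const)
qed

lemma unitary_first_row:
  assumes "unitary_rel emb t"
  shows "(\<Sum>k\<in>idx. Abs_fps (tser t (-1) k) * fps_translate emb (1/2) (Abs_fps (tser t (-1) (- k)))) = 0"
proof (rule fps_ext)
  fix n
  have "(\<Sum>k\<in>idx. sprod (tser t (-1) k) (sshift emb (1/2) (tser t (- 1) (- k))) n) = 0"
    using assms unfolding unitary_rel_def idx_def by fastforce
  then show "fps_nth (\<Sum>k\<in>idx. Abs_fps (tser t (-1) k) * fps_translate emb (1/2) (Abs_fps (tser t (-1) (- k)))) n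
      = fps_nth 0 n"
    by (simp add: sprod_eq_fps_nth fps_translate_Abs_fps fps_sum_nth)
qed

lemma gauss_first_row:
  assumes G: "gauss_decomp t kk ee ff" and j: "j \<in> idx"
  shows "Abs_fps (tser t (-1) j) = Abs_fps (kk (-1)) * (if j = -1 then 1 else Abs_fps (ee (-1) j))"
proof -
  have "-1 \<in> idx" by (simp add: idx_def)
  with G j have "tser t (-1) j n = (\<Sum>m\<in>idx.
      sprod (sprod (if m = -1 then sone else if m < -1 then ff (-1) m else (\<lambda>_. 0)) (kk m))
            (if m = j then sone else if m < j then ee m j else (\<lambda>_. 0)) n)" for n
    unfolding gauss_decomp_def by blast
  then have "Abs_fps (tser t (-1) j) = (\<Sum>m\<in>idx.
      Abs_fps (if m = -1 then sone else if m < -1 then ff (-1) m else (\<lambda>_. 0)) * Abs_fps (kk m)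
      * Abs_fps (if m = j then sone else if m < j then ee m j else (\<lambda>_. 0)))"
    by (intro fps_ext) (simp add: fps_sum_nth sprod_eq_fps_nth Abs_fps_sprod)
  then show ?thesis
    using j by (auto simp: sum_idx idx_def Abs_fps_sone fps_zero_def[symmetric])
qed

text \<open>\<open>algebra_simps\<close> does not move numerals past other factors in a noncommutative ring, so
  numerals are first expanded into sums of ones.\<close>

lemmas numeral_expand = numeral_Bit0 numeral_Bit1 numeral_One distrib_left distrib_right mult_1 mult_1_right

text \<open>K, A, B stand for k_{-1}(u), e_{-1,0}(u), e_{-1,1}(u) and the primed letters for their
  values at u + 1/2. The \<open>rtt\<close> assumptions are the RTT entries (-1,-1; j,l), with m, 0, p for
  j, l = -1, 0, 1, and Q is the contribution of the Q-term shared by the entries with l = -j.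
  \<open>unitary_mm\<close> is the (-1,-1) entry of T(u) T^t(u + 1/2) = 1.\<close>

locale first_row_relations =
  fixes K K' A A' B B' Q :: "'b::ring_1"
  assumes cancel_three: "\<And>X Y :: 'b. 3 * X = 3 * Y \<Longrightarrow> X = Y"
    and cancel_K: "\<And>X Y. K * X = K * Y \<Longrightarrow> X = Y"
    and cancel_K': "\<And>X Y. K' * X = K' * Y \<Longrightarrow> X = Y"
    and rtt_mm: "3 * (K * K') = K' * K + 2 * (K' * K)"
    and rtt_m0: "3 * (K * K' * A') = K' * A' * K + 2 * (K' * K * A)"
    and rtt_0m: "3 * (K * A * K') = K' * K * A + 2 * (K' * A' * K)"
    and rtt_00: "3 * (K * A * K' * A') = K' * A' * K * A + 2 * (K' * A' * K * A) - Q"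
    and rtt_mp: "3 * (K * K' * B') = K' * B' * K + 2 * (K' * K * B) - Q"
    and rtt_pm: "3 * (K * B * K') = K' * K * B + 2 * (K' * B' * K) - Q"
    and unitary_mm: "K * K' * B' + K * A * K' * A' + K * B * K' = 0"
begin

lemma K_K'_commute: "K * K' = K' * K"
proof (rule cancel_three)
  show "3 * (K * K') = 3 * (K' * K)"
    using rtt_mm by (simp only: numeral_expand; simp add: algebra_simps)
qed

lemma K'_A'_K: "K' * A' * K = K * K' * (3 * A' - 2 * A)"
proof -
  have "K' * A' * K = 3 * (K * K' * A') - 2 * (K' * K * A)" using rtt_m0 by (simp add: algebra_simps)
  also have "\<dots> = K * K' * (3 * A' - 2 * A)"
    by (simp only: K_K'_commute[symmetric] numeral_expand; simp add: algebra_simps)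
  finally show ?thesis .
qed

lemma A_K': "A * K' = K' * (2 * A' - A)"
proof (rule cancel_three, rule cancel_K)
  have "K * (3 * (A * K')) = 3 * (K * A * K')"
    by (simp only: numeral_expand; simp add: algebra_simps)
  also have "\<dots> = K' * K * A + 2 * (K' * A' * K)" by (rule rtt_0m)
  also have "\<dots> = K * (3 * (K' * (2 * A' - A)))"
    by (simp only: K'_A'_K K_K'_commute[symmetric] numeral_expand; simp add: algebra_simps)
  finally show "K * (3 * (A * K')) = K * (3 * (K' * (2 * A' - A)))" .
qed

lemma Q_eq: "Q = K * K' * (9 * A' * A - 6 * A * A - 6 * A' * A' + 3 * A * A')"
proof -
  have "Q = 3 * (K' * A' * K * A) - 3 * (K * A * K' * A')"
    using rtt_00 by (simp only: numeral_expand; simp add: algebra_simps)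
  also have "K' * A' * K * A = K * K' * (3 * A' - 2 * A) * A"
    by (simp only: K'_A'_K)
  also have "K * A * K' * A' = K * (K' * (2 * A' - A)) * A'"
    by (simp only: A_K' mult.assoc)
  also have "3 * (K * K' * (3 * A' - 2 * A) * A) - 3 * (K * (K' * (2 * A' - A)) * A')
      = K * K' * (9 * A' * A - 6 * A * A - 6 * A' * A' + 3 * A * A')"
    by (simp only: numeral_expand; simp add: algebra_simps)
  finally show ?thesis .
qed

lemma B_K': "B * K' = K' * (2 * B' - B + 3 * A' * A - 2 * A * A - 2 * A' * A' + A * A')"
proof (rule cancel_three, rule cancel_K)
  have K'_B'_K: "K' * B' * K = 3 * (K * K' * B') - 2 * (K * K' * B) + Q"
    using rtt_mp by (simp only: K_K'_commute; simp add: algebra_simps)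
  have "K * (3 * (B * K')) = 3 * (K * B * K')"
    by (simp only: numeral_expand; simp add: algebra_simps)
  also have "\<dots> = K' * K * B + 2 * (K' * B' * K) - Q" by (rule rtt_pm)
  also have "\<dots> = K * K' * B + 2 * (3 * (K * K' * B') - 2 * (K * K' * B) + Q) - Q"
    by (simp only: K'_B'_K K_K'_commute)
  also have "\<dots> = K * (3 * (K' * (2 * B' - B + 3 * A' * A - 2 * A * A - 2 * A' * A' + A * A')))"
    by (simp only: Q_eq numeral_expand; simp add: algebra_simps)
  finally show "K * (3 * (B * K')) = K * (3 * (K' * (2 * B' - B + 3 * A' * A - 2 * A * A - 2 * A' * A' + A * A')))" .
qed

lemma first_row_identity: "3 * B' - B + 3 * A' * A - 2 * A * A = 0"
proof (rule cancel_K', rule cancel_K)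
  have "K * (K' * (3 * B' - B + 3 * A' * A - 2 * A * A))
      = K * K' * B' + K * (K' * (2 * A' - A)) * A' + K * (K' * (2 * B' - B + 3 * A' * A - 2 * A * A - 2 * A' * A' + A * A'))"
    by (simp only: numeral_expand; simp add: algebra_simps)
  also have "\<dots> = K * K' * B' + K * A * K' * A' + K * B * K'"
    by (simp only: A_K' B_K' mult.assoc)
  also have "\<dots> = 0" by (rule unitary_mm)
  finally show "K * (K' * (3 * B' - B + 3 * A' * A - 2 * A * A)) = K * (K' * 0)" by simp
qed

end

lemma yangian_first_row_relations:
  fixes emb :: "complex \<Rightarrow> 'a::ring_1" and t ee ff :: "int \<Rightarrow> int \<Rightarrow> nat \<Rightarrow> 'a"
    and kk :: "int \<Rightarrow> nat \<Rightarrow> 'a"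
  defines "K \<equiv> Abs_fps (kk (-1))" and "A \<equiv> Abs_fps (ee (-1) 0)" and "B \<equiv> Abs_fps (ee (-1) 1)"
    and "K' \<equiv> fps_translate emb (1/2) (Abs_fps (kk (-1)))"
    and "A' \<equiv> fps_translate emb (1/2) (Abs_fps (ee (-1) 0))"
    and "B' \<equiv> fps_translate emb (1/2) (Abs_fps (ee (-1) 1))"
  assumes E: "is_calg emb" and R: "RTT_rel emb t" and U: "unitary_rel emb t"
    and G: "gauss_decomp t kk ee ff"
  shows "first_row_relations K K' A A' B B' (K' * B' * K + K' * A' * K * A + K' * K * B)"
proof -
  have m: "(-1::int) \<in> idx" "(0::int) \<in> idx" "(1::int) \<in> idx" by (simp_all add: idx_def)
  have T: "Abs_fps (tser t (-1) (-1)) = K" "Abs_fps (tser t (-1) 0) = K * A"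
    "Abs_fps (tser t (-1) 1) = K * B"
    using gauss_first_row[OF G] m by (simp_all add: K_def A_def B_def)
  have T': "fps_translate emb (1/2) K = K'" "fps_translate emb (1/2) (K * A) = K' * A'"
    "fps_translate emb (1/2) (K * B) = K' * B'"
    by (simp_all add: K_def A_def B_def K'_def A'_def B'_def fps_translate_mult[OF E])
  have K0: "fps_nth K 0 = 1" using G m by (simp add: K_def gauss_decomp_def)
  then have K'0: "fps_nth K' 0 = 1" by (simp add: K_def K'_def fps_translate_nth_0)
  note rtt = rtt_first_row[OF E R]
  show ?thesis
  proof unfold_locales
    show "\<And>X Y :: 'a fps. 3 * X = 3 * Y \<Longrightarrow> X = Y" by (rule fps_three_cancel[OF E])
    show "\<And>X Y :: 'a fps. K * X = K * Y \<Longrightarrow> X = Y" by (rule fps_mult_left_cancel[OF K0])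
    show "\<And>X Y :: 'a fps. K' * X = K' * Y \<Longrightarrow> X = Y" by (rule fps_mult_left_cancel[OF K'0])
    show "3 * (K * K') = K' * K + 2 * (K' * K)"
      using rtt[OF m(1) m(1)] by (simp add: T T')
    show "3 * (K * K' * A') = K' * A' * K + 2 * (K' * K * A)"
      using rtt[OF m(1) m(2)] by (simp add: T T' mult.assoc)
    show "3 * (K * A * K') = K' * K * A + 2 * (K' * A' * K)"
      using rtt[OF m(2) m(1)] by (simp add: T T' mult.assoc)
    show "3 * (K * A * K' * A') = K' * A' * K * A + 2 * (K' * A' * K * A)
        - (K' * B' * K + K' * A' * K * A + K' * K * B)"
      using rtt[OF m(2) m(2)] by (simp add: T T' mult.assoc sum_idx)
    show "3 * (K * K' * B') = K' * B' * K + 2 * (K' * K * B) - (K' * B' * K + K' * A' * K * A + K' * K * B)"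
      using rtt[OF m(1) m(3)] by (simp add: T T' mult.assoc sum_idx)
    show "3 * (K * B * K') = K' * K * B + 2 * (K' * B' * K) - (K' * B' * K + K' * A' * K * A + K' * K * B)"
      using rtt[OF m(3) m(1)] by (simp add: T T' mult.assoc sum_idx)
    show "K * K' * B' + K * A * K' * A' + K * B * K' = 0"
      using unitary_first_row[OF U] by (simp add: T T' mult.assoc sum_idx)
  qed
qed

theorem lemma3p8:
  fixes emb :: "complex \<Rightarrow> 'a::ring_1"
    and t :: "int \<Rightarrow> int \<Rightarrow> nat \<Rightarrow> 'a"
    and kk :: "int \<Rightarrow> nat \<Rightarrow> 'a"
    and ee ff :: "int \<Rightarrow> int \<Rightarrow> nat \<Rightarrow> 'a"
  assumes "is_calg emb"
    and "RTT_rel emb t"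
    and "unitary_rel emb t"
    and "gauss_decomp t kk ee ff"
  shows "\<forall>n. 3 * sshift emb (1/2) (ee (-1) 1) n - ee (-1) 1 n
            + 3 * sprod (sshift emb (1/2) (ee (-1) 0)) (ee (-1) 0) n
            - 2 * sprod (ee (-1) 0) (ee (-1) 0) n = 0"
proof -
  have "3 * fps_translate emb (1/2) (Abs_fps (ee (-1) 1)) - Abs_fps (ee (-1) 1)
      + 3 * fps_translate emb (1/2) (Abs_fps (ee (-1) 0)) * Abs_fps (ee (-1) 0)
      - 2 * Abs_fps (ee (-1) 0) * Abs_fps (ee (-1) 0) = 0"
    using yangian_first_row_relations[OF assms] by (rule first_row_relations.first_row_identity)
  then show ?thesis
    by (simp add: fps_eq_iff fps_translate_Abs_fps sprod_eq_fps_nth fps_numeral_fps_const mult.assoc)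
qed

end
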